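(* Let $y\in\mathfrak M_0$ and let $(x_n)_{n\ge1}$ be a norm-bounded sequence in $\mathfrak M$ such that $\lim_{n\to\infty}\chi(x_n)$ exists. Then \[\lim_{n\to\infty}\chi\Big(x_n\exp\Big(\frac1{|I_n|}\sum_{k\in I_n}\gamma_k(y)\Big)\Big)=\Big(\lim_{n\to\infty}\chi(x_n)\Big)e^{\chi(y)}.\]
   Context: $\mathcal I$ is the set of finite intervals of $\mathbb Z$. $(\mathfrak M,(M_I)_{I\in\mathcal I})$ is a quasi-local algebra: unital $C^*$-algebra $\mathfrak M$, $W^*$-subalgebras $M_I$ with $M_I\subseteq M_J$ for $I\subseteq J$, $\mathfrak M_0:=\bigcup_IM_I$ dense, common unit, $M_I$ and $M_J$ commuting when $I\cap J=\varnothing$. $\gamma:\mathbb Z\curvearrowright\mathfrak M$ is an action by $*$-automorphisms with $\gamma_j(M_I)=M_{I+j}$. $\chi$ is a $\gamma$-invariant multiplicative state ($\chi(xy)=\chi(x)\chi(y)$ for $x\in M_I,y\in M_J$, $I\cap J=\varnothing$). $(I_n)$ is an increasing sequence in $\mathcal I$ with union $\mathbb Z$. *)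

theory Defs
  imports "HOL-Analysis.Analysis"
begin

text \<open>A unital C*-algebra is modelled as the whole of a type 'a, which is a real Banach
  algebra with unit (this provides the norm, the algebra structure and the exponential
  series), together with a complex scalar multiplication cmul (compatible with the real
  one) and an involution st.\<close>

definition unital_cstar_algebra ::
  "(complex \<Rightarrow> 'a::{real_normed_algebra_1,banach} \<Rightarrow> 'a) \<Rightarrow> ('a \<Rightarrow> 'a) \<Rightarrow> bool" where
  "unital_cstar_algebra cmul st \<longleftrightarrow>
     (\<forall>a x y. cmul a (x + y) = cmul a x + cmul a y) \<and>
     (\<forall>a b x. cmul (a + b) x = cmul a x + cmul b x) \<and>
     (\<forall>a b x. cmul (a * b) x = cmul a (cmul b x)) \<and>
     (\<forall>r x. cmul (complex_of_real r) x = r *\<^sub>R x) \<and>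
     (\<forall>a x y. cmul a (x * y) = cmul a x * y \<and> cmul a (x * y) = x * cmul a y) \<and>
     (\<forall>a x. norm (cmul a x) = cmod a * norm x) \<and>
     (\<forall>x. st (st x) = x) \<and>
     (\<forall>x y. st (x + y) = st x + st y) \<and>
     (\<forall>x y. st (x * y) = st y * st x) \<and>
     (\<forall>a x. st (cmul a x) = cmul (cnj a) (st x)) \<and>
     (\<forall>x. norm (st x * x) = (norm x)\<^sup>2)"

definition bounded_cfunctional ::
  "(complex \<Rightarrow> 'a::real_normed_vector \<Rightarrow> 'a) \<Rightarrow> 'a set \<Rightarrow> ('a \<Rightarrow> complex) \<Rightarrow> bool" where
  "bounded_cfunctional cmul S f \<longleftrightarrow>
     (\<forall>x\<in>S. \<forall>y\<in>S. f (x + y) = f x + f y) \<and>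
     (\<forall>c. \<forall>x\<in>S. f (cmul c x) = c * f x) \<and>
     (\<exists>C. \<forall>x\<in>S. cmod (f x) \<le> C * norm x)"

definition fnorm :: "'a::real_normed_vector set \<Rightarrow> ('a \<Rightarrow> complex) \<Rightarrow> real" where
  "fnorm S f = Sup {cmod (f x) | x. x \<in> S \<and> norm x \<le> 1}"

text \<open>P is a predual of S: P is a complex subspace of the bounded functionals on S
  (functions vanishing off S), and the evaluation map x \<mapsto> (\<phi> \<mapsto> \<phi> x) is an isometric
  bijection of S onto the (bounded, linear) dual of P.\<close>

definition is_predual ::
  "(complex \<Rightarrow> 'a::real_normed_vector \<Rightarrow> 'a) \<Rightarrow> 'a set \<Rightarrow> ('a \<Rightarrow> complex) set \<Rightarrow> bool" where
  "is_predual cmul S P \<longleftrightarrow>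
     (\<forall>\<phi>\<in>P. bounded_cfunctional cmul S \<phi> \<and> (\<forall>x. x \<notin> S \<longrightarrow> \<phi> x = 0)) \<and>
     (\<lambda>_. 0) \<in> P \<and>
     (\<forall>\<phi>\<in>P. \<forall>\<psi>\<in>P. (\<lambda>x. \<phi> x + \<psi> x) \<in> P) \<and>
     (\<forall>c. \<forall>\<phi>\<in>P. (\<lambda>x. c * \<phi> x) \<in> P) \<and>
     (\<forall>\<Phi>. ((\<forall>\<phi>\<in>P. \<forall>\<psi>\<in>P. \<Phi> (\<lambda>x. \<phi> x + \<psi> x) = \<Phi> \<phi> + \<Phi> \<psi>) \<and>
           (\<forall>c. \<forall>\<phi>\<in>P. \<Phi> (\<lambda>x. c * \<phi> x) = c * \<Phi> \<phi>) \<and>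
           (\<exists>C. \<forall>\<phi>\<in>P. cmod (\<Phi> \<phi>) \<le> C * fnorm S \<phi>))
        \<longrightarrow> (\<exists>!x. x \<in> S \<and> (\<forall>\<phi>\<in>P. \<Phi> \<phi> = \<phi> x))) \<and>
     (\<forall>x\<in>S. norm x = Sup {cmod (\<phi> x) | \<phi>. \<phi> \<in> P \<and> fnorm S \<phi> \<le> 1})"

text \<open>A W*-subalgebra: a unital (common unit) C*-subalgebra which is a W*-algebra,
  i.e. (Sakai) a dual Banach space.\<close>

definition wstar_subalgebra ::
  "(complex \<Rightarrow> 'a::{real_normed_algebra_1,banach} \<Rightarrow> 'a) \<Rightarrow> ('a \<Rightarrow> 'a) \<Rightarrow> 'a set \<Rightarrow> bool" where
  "wstar_subalgebra cmul st S \<longleftrightarrow>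
     1 \<in> S \<and>
     (\<forall>x\<in>S. \<forall>y\<in>S. x + y \<in> S \<and> x * y \<in> S) \<and>
     (\<forall>c. \<forall>x\<in>S. cmul c x \<in> S) \<and>
     (\<forall>x\<in>S. st x \<in> S) \<and>
     closed S \<and>
     (\<exists>P. is_predual cmul S P)"

definition fin_interval :: "int set \<Rightarrow> bool" where
  "fin_interval I \<longleftrightarrow> (\<exists>a b. a \<le> b \<and> I = {a..b})"

definition quasi_local ::
  "(complex \<Rightarrow> 'a::{real_normed_algebra_1,banach} \<Rightarrow> 'a) \<Rightarrow> ('a \<Rightarrow> 'a) \<Rightarrow> (int set \<Rightarrow> 'a set) \<Rightarrow> bool" where
  "quasi_local cmul st M \<longleftrightarrow>
     unital_cstar_algebra cmul st \<and>
     (\<forall>I. fin_interval I \<longrightarrow> wstar_subalgebra cmul st (M I)) \<and>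
     (\<forall>I J. fin_interval I \<longrightarrow> fin_interval J \<longrightarrow> I \<subseteq> J \<longrightarrow> M I \<subseteq> M J) \<and>
     closure (\<Union>{M I | I. fin_interval I}) = UNIV \<and>
     (\<forall>I J. fin_interval I \<longrightarrow> fin_interval J \<longrightarrow> I \<inter> J = {} \<longrightarrow>
        (\<forall>x\<in>M I. \<forall>y\<in>M J. x * y = y * x))"

definition local_part :: "(int set \<Rightarrow> 'a set) \<Rightarrow> 'a set" where
  "local_part M = \<Union>{M I | I. fin_interval I}"

definition star_automorphism ::
  "(complex \<Rightarrow> 'a::{real_normed_algebra_1,banach} \<Rightarrow> 'a) \<Rightarrow> ('a \<Rightarrow> 'a) \<Rightarrow> ('a \<Rightarrow> 'a) \<Rightarrow> bool" where
  "star_automorphism cmul st g \<longleftrightarrow>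
     bij g \<and>
     (\<forall>x y. g (x + y) = g x + g y) \<and>
     (\<forall>c x. g (cmul c x) = cmul c (g x)) \<and>
     (\<forall>x y. g (x * y) = g x * g y) \<and>
     (\<forall>x. g (st x) = st (g x))"

definition translation_action ::
  "(complex \<Rightarrow> 'a::{real_normed_algebra_1,banach} \<Rightarrow> 'a) \<Rightarrow> ('a \<Rightarrow> 'a) \<Rightarrow> (int set \<Rightarrow> 'a set)
     \<Rightarrow> (int \<Rightarrow> 'a \<Rightarrow> 'a) \<Rightarrow> bool" where
  "translation_action cmul st M \<gamma> \<longleftrightarrow>
     \<gamma> 0 = id \<and>
     (\<forall>j k. \<gamma> (j + k) = \<gamma> j \<circ> \<gamma> k) \<and>
     (\<forall>j. star_automorphism cmul st (\<gamma> j)) \<and>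
     (\<forall>j I. fin_interval I \<longrightarrow> \<gamma> j ` M I = M ((\<lambda>i. i + j) ` I))"

definition is_state ::
  "(complex \<Rightarrow> 'a::{real_normed_algebra_1,banach} \<Rightarrow> 'a) \<Rightarrow> ('a \<Rightarrow> 'a) \<Rightarrow> ('a \<Rightarrow> complex) \<Rightarrow> bool" where
  "is_state cmul st \<omega> \<longleftrightarrow>
     (\<forall>x y. \<omega> (x + y) = \<omega> x + \<omega> y) \<and>
     (\<forall>c x. \<omega> (cmul c x) = c * \<omega> x) \<and>
     (\<forall>x. Im (\<omega> (st x * x)) = 0 \<and> Re (\<omega> (st x * x)) \<ge> 0) \<and>
     \<omega> 1 = 1"

definition invariant_multiplicative_state ::
  "(complex \<Rightarrow> 'a::{real_normed_algebra_1,banach} \<Rightarrow> 'a) \<Rightarrow> ('a \<Rightarrow> 'a) \<Rightarrow> (int set \<Rightarrow> 'a set)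
     \<Rightarrow> (int \<Rightarrow> 'a \<Rightarrow> 'a) \<Rightarrow> ('a \<Rightarrow> complex) \<Rightarrow> bool" where
  "invariant_multiplicative_state cmul st M \<gamma> \<omega> \<longleftrightarrow>
     is_state cmul st \<omega> \<and>
     (\<forall>j x. \<omega> (\<gamma> j x) = \<omega> x) \<and>
     (\<forall>I J. fin_interval I \<longrightarrow> fin_interval J \<longrightarrow> I \<inter> J = {} \<longrightarrow>
        (\<forall>x\<in>M I. \<forall>y\<in>M J. \<omega> (x * y) = \<omega> x * \<omega> y))"

end

theory Submission
  imports Defs "HOL-Computational_Algebra.Formal_Power_Series"
begin

text \<open>Write \<omega> for the state \<chi> and put d_n = (1/|I_n|) \<Sum>_{k \<in> I_n} (\<gamma>_k y - \<omega>(y) 1).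
  Translates of the centred element y - \<omega>(y) 1 lying farther apart than the support of y sit in
  disjoint local algebras, so multiplicativity makes them uncorrelated and the variance
  \<omega>(d_n* d_n) is O(1/|I_n|). Writing exp(\<omega>(y) 1 + d_n) = e^\<omega>(y) (1 + F_n d_n) with F_n bounded,
  Cauchy-Schwarz gives |\<omega>(x_n F_n d_n)|^2 \<le> \<parallel>x_n F_n\<parallel>^2 \<omega>(d_n* d_n) \<rightarrow> 0. The norm bounds this
  needs, that states and *-automorphisms are contractive, both come from the binomial series
  of sqrt(1 - z).\<close>

section \<open>Power series in Banach algebras\<close>

lemma abs_gbinomial_half_le_one: "\<bar>(1/2::real) gchoose n\<bar> \<le> 1"
proof (induction n)
  case 0
  then show ?case by simp
next
  case (Suc k)
  have "real (Suc k) * ((1/2::real) gchoose Suc k) = (1/2 - real k) * ((1/2::real) gchoose k)"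
    using gbinomial_mult_1[of "1/2::real" k] by (simp add: algebra_simps)
  then have "real (Suc k) * \<bar>(1/2::real) gchoose Suc k\<bar> = \<bar>1/2 - real k\<bar> * \<bar>(1/2::real) gchoose k\<bar>"
    by (metis abs_mult abs_of_nat)
  also have "\<dots> \<le> real (Suc k) * 1"
    using Suc by (intro mult_mono) auto
  finally show ?case by (simp del: of_nat_Suc)
qed

text \<open>Meaningful only for \<open>\<parallel>z\<parallel> < 1\<close>, where the series converges absolutely.\<close>

definition binomial_sqrt :: "'a::{real_normed_algebra_1,banach} \<Rightarrow> 'a" where
  "binomial_sqrt z = (\<Sum>n. ((1/2::real) gchoose n) *\<^sub>R z ^ n)"

lemma summable_norm_binomial_sqrt_series:
  fixes z :: "'a::{real_normed_algebra_1,banach}"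
  assumes "norm z < 1"
  shows "summable (\<lambda>n. norm (((1/2::real) gchoose n) *\<^sub>R z ^ n))"
proof (rule summable_comparison_test[OF _ summable_geometric[of "norm z"]])
  have "norm (((1/2::real) gchoose n) *\<^sub>R z ^ n) \<le> 1 * norm z ^ n" for n
    unfolding norm_scaleR
    using abs_gbinomial_half_le_one[of n] norm_power_ineq[of z n] by (intro mult_mono) auto
  then show "\<exists>N. \<forall>n\<ge>N. norm (norm (((1/2::real) gchoose n) *\<^sub>R z ^ n)) \<le> norm z ^ n"
    by auto
qed (use assms in auto)

lemma binomial_sqrt_square:
  fixes z :: "'a::{real_normed_algebra_1,banach}"
  assumes "norm z < 1"
  shows "binomial_sqrt z * binomial_sqrt z = 1 + z"
proof -
  let ?c = "\<lambda>n. (1/2::real) gchoose n"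
  have "binomial_sqrt z * binomial_sqrt z = (\<Sum>n. \<Sum>i\<le>n. ?c i *\<^sub>R z ^ i * ?c (n - i) *\<^sub>R z ^ (n - i))"
    unfolding binomial_sqrt_def
    by (rule Cauchy_product[OF summable_norm_binomial_sqrt_series summable_norm_binomial_sqrt_series])
      (use assms in auto)
  also have "\<dots> = (\<Sum>n. ((1::real) gchoose n) *\<^sub>R z ^ n)"
  proof -
    have "(\<Sum>i\<le>n. ?c i *\<^sub>R z ^ i * ?c (n - i) *\<^sub>R z ^ (n - i)) = (\<Sum>i\<le>n. ?c i * ?c (n - i)) *\<^sub>R z ^ n"
      for n
      unfolding scaleR_sum_left by (intro sum.cong refl) (simp add: power_add[symmetric])
    moreover have "(\<Sum>i\<le>n. ?c i * ?c (n - i)) = (1::real) gchoose n" for n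
      using gbinomial_Vandermonde[of "1/2::real" "1/2" n] by (simp add: atLeast0AtMost)
    ultimately show ?thesis by simp
  qed
  also have "\<dots> = (\<Sum>n\<in>{0,1}. ((1::real) gchoose n) *\<^sub>R z ^ n)"
  proof (rule suminf_finite)
    fix n :: nat
    assume "n \<notin> {0,1}"
    then have "(1::real) gchoose n = 0"
      using binomial_gbinomial[of 1 n, where 'a=real] by (simp add: binomial_eq_0)
    then show "((1::real) gchoose n) *\<^sub>R z ^ n = 0" by simp
  qed simp
  also have "\<dots> = 1 + z" by simp
  finally show ?thesis .
qed

lemma binomial_sqrt_commute:
  fixes z :: "'a::{real_normed_algebra_1,banach}"
  assumes "norm z < 1" and "w * z = z * w"
  shows "w * binomial_sqrt z = binomial_sqrt z * w"
proof -
  let ?a = "\<lambda>n. ((1/2::real) gchoose n) *\<^sub>R z ^ n"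
  have "summable ?a"
    by (rule summable_norm_cancel[OF summable_norm_binomial_sqrt_series[OF assms(1)]])
  have "w * binomial_sqrt z = (\<Sum>n. w * ?a n)"
    unfolding binomial_sqrt_def by (rule suminf_mult[OF \<open>summable ?a\<close>, symmetric])
  also have "\<dots> = (\<Sum>n. ?a n * w)"
    using power_commuting_commutes[OF assms(2)[symmetric]] by (simp add: mult_scaleR_left)
  also have "\<dots> = binomial_sqrt z * w"
    unfolding binomial_sqrt_def by (rule suminf_mult2[OF \<open>summable ?a\<close>, symmetric])
  finally show ?thesis .
qed

lemma exp_eq_one_plus_mult:
  fixes D :: "'a::{real_normed_algebra_1,banach}"
  shows "\<exists>F. exp D = 1 + F * D \<and> norm F \<le> exp (norm D)"
proof -
  define f where "f n = D ^ n /\<^sub>R fact (Suc n)" for n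
  have norm_f: "norm (f n) \<le> norm D ^ n /\<^sub>R fact n" for n
  proof -
    have "norm (f n) \<le> norm D ^ n / fact (Suc n)"
      unfolding f_def using norm_power_ineq[of D n]
      by (simp add: divide_inverse_commute divide_right_mono del: fact_Suc)
    also have "\<dots> \<le> norm D ^ n / fact n"
      by (intro divide_left_mono) (auto simp: fact_mono)
    finally show ?thesis by (simp add: divide_inverse_commute)
  qed
  have summable_norm_f: "summable (\<lambda>n. norm (f n))"
    by (rule summable_comparison_test[OF _ summable_exp_generic[of "norm D"]]) (use norm_f in auto)
  then have "summable f" by (rule summable_norm_cancel)
  have "suminf f * D = (\<Sum>n. D ^ Suc n /\<^sub>R fact (Suc n))"
    using suminf_mult2[OF \<open>summable f\<close>, of D]
    by (simp add: f_def power_Suc2 del: power_Suc fact_Suc)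
  also have "\<dots> = exp D - 1"
    using suminf_split_head[OF summable_exp_generic[of D]] by (simp add: exp_def del: fact_Suc)
  finally have "exp D = 1 + suminf f * D" by simp
  moreover have "norm (suminf f) \<le> exp (norm D)"
    using summable_norm[OF summable_norm_f] suminf_le[OF norm_f summable_norm_f summable_exp_generic]
    by (simp add: exp_def)
  ultimately show ?thesis by blast
qed

lemma norm_le_norm_of_unit_ball_bound:
  fixes f :: "'a::real_normed_vector \<Rightarrow> 'b::real_normed_vector"
  assumes homogeneous: "\<And>r x. P x \<Longrightarrow> P (r *\<^sub>R x) \<and> f (r *\<^sub>R x) = r *\<^sub>R f x"
    and ball: "\<And>x. P x \<Longrightarrow> norm x < 1 \<Longrightarrow> norm (f x) \<le> 1"
    and "P x"
  shows "norm (f x) \<le> norm x"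
proof (rule field_le_epsilon)
  fix e :: real
  assume "e > 0"
  define t where "t = norm x + e"
  have "t > 0" using \<open>e > 0\<close> by (simp add: t_def add_nonneg_pos)
  have "norm ((1/t) *\<^sub>R x) < 1"
    using \<open>t > 0\<close> \<open>e > 0\<close> by (simp add: t_def field_simps)
  then have "norm (f ((1/t) *\<^sub>R x)) \<le> 1"
    using ball homogeneous[OF \<open>P x\<close>] by blast
  then have "norm (f x) / t \<le> 1"
    using homogeneous[OF \<open>P x\<close>, of "1/t"] \<open>t > 0\<close> by simp
  then show "norm (f x) \<le> norm x + e"
    using \<open>t > 0\<close> by (simp add: t_def field_simps)
qed

lemma square_le_of_quadratic_nonneg:
  fixes A U C :: real
  assumes "C \<ge> 0" and nonneg: "\<And>s. 0 \<le> A + 2 * s * U + s\<^sup>2 * C"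
  shows "U\<^sup>2 \<le> A * C"
proof (cases "C = 0")
  case True
  show ?thesis
  proof (cases "U = 0")
    case False
    have "0 \<le> A + 2 * (-(A + 1) / (2 * U)) * U + (-(A + 1) / (2 * U))\<^sup>2 * C" by (rule nonneg)
    with False True show ?thesis by (simp add: field_simps)
  qed (use True in simp)
next
  case False
  with \<open>C \<ge> 0\<close> have "C > 0" by simp
  have "0 \<le> A + 2 * (-U / C) * U + (-U / C)\<^sup>2 * C" by (rule nonneg)
  then have "U\<^sup>2 / C \<le> A" using \<open>C > 0\<close> by (simp add: field_simps power2_eq_square)
  then show ?thesis using \<open>C > 0\<close> by (simp add: field_simps)
qed

lemma sum_banded_le:
  fixes f :: "int \<Rightarrow> real" and I :: "int set" and k w :: int and E :: real
  assumes "finite I" "w \<ge> 0" and bound: "\<And>l. \<bar>f l\<bar> \<le> E"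
    and band: "\<And>l. \<bar>k - l\<bar> > w \<Longrightarrow> f l = 0"
  shows "(\<Sum>l\<in>I. \<bar>f l\<bar>) \<le> (2 * w + 1) * E"
proof -
  have "(\<Sum>l\<in>I. \<bar>f l\<bar>) \<le> (\<Sum>l\<in>I. if l \<in> {k - w..k + w} then E else 0)"
    using bound band by (intro sum_mono) (auto simp: abs_le_iff not_le)
  also have "\<dots> = E * real (card (I \<inter> {k - w..k + w}))"
    using \<open>finite I\<close> by (simp add: sum.If_cases Int_def)
  also have "\<dots> \<le> E * real (card {k - w..k + w})"
    using bound[of k] by (intro mult_left_mono) (auto intro: card_mono simp del: card_atLeastAtMost_int)
  also have "\<dots> = (2 * w + 1) * E"
    using \<open>w \<ge> 0\<close> by simp
  finally show ?thesis .
qed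

lemma finite_subset_incseq_Union:
  fixes A :: "nat \<Rightarrow> 'b set"
  assumes mono: "\<And>n. A n \<subseteq> A (Suc n)" and "finite F" "F \<subseteq> (\<Union>n. A n)"
  shows "\<exists>n. F \<subseteq> A n"
  using \<open>finite F\<close> \<open>F \<subseteq> (\<Union>n. A n)\<close>
proof (induction F rule: finite_induct)
  case (insert i F)
  then obtain n1 n2 where "F \<subseteq> A n1" "i \<in> A n2" by auto
  moreover have "A n1 \<subseteq> A (max n1 n2)" "A n2 \<subseteq> A (max n1 n2)"
    by (rule lift_Suc_mono_le[of A, OF mono]; simp)+
  ultimately show ?case by blast
qed simp

lemma card_tendsto_at_top_of_exhausting:
  fixes A :: "nat \<Rightarrow> int set"
  assumes fin: "\<And>n. finite (A n)" and mono: "\<And>n. A n \<subseteq> A (Suc n)" and exhaust: "(\<Union>n. A n) = UNIV"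
  shows "filterlim (\<lambda>n. real (card (A n))) at_top sequentially"
proof (rule filterlim_at_top[THEN iffD2], intro allI)
  fix Z :: real
  define m where "m = nat \<lceil>Z\<rceil>"
  obtain n0 where n0: "{0..int m} \<subseteq> A n0"
    using finite_subset_incseq_Union[of A "{0..int m}"] mono exhaust by auto
  have "Z \<le> real (card (A n))" if "n \<ge> n0" for n
  proof -
    have "{0..int m} \<subseteq> A n" using n0 lift_Suc_mono_le[of A, OF mono that] by blast
    then have "card {0..int m} \<le> card (A n)" using fin by (intro card_mono) auto
    then have "m + 1 \<le> card (A n)" by simp
    moreover have "Z \<le> real m" unfolding m_def by linarith
    ultimately show ?thesis by linarith
  qed
  then show "eventually (\<lambda>n. Z \<le> real (card (A n))) sequentially"
    unfolding eventually_sequentially by blast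
qed

lemma average_eq_add_average_diff:
  fixes f :: "'i \<Rightarrow> 'a::real_vector"
  assumes "card I > 0"
  shows "(1 / real (card I)) *\<^sub>R (\<Sum>k\<in>I. f k) = p + (1 / real (card I)) *\<^sub>R (\<Sum>k\<in>I. f k - p)"
  using assms by (simp add: sum_subtractf scaleR_diff_right sum_constant_scaleR)

lemma norm_average_le:
  fixes f :: "'i \<Rightarrow> 'a::real_normed_vector"
  assumes bound: "\<And>k. norm (f k) \<le> R"
  shows "norm ((1 / real (card I)) *\<^sub>R (\<Sum>k\<in>I. f k)) \<le> R"
proof (cases "card I = 0")
  case True
  then show ?thesis using order_trans[OF norm_ge_zero bound] by simp
next
  case False
  have "norm (\<Sum>k\<in>I. f k) \<le> real (card I) * R"
    using sum_norm_le[of I f "\<lambda>_. R"] bound by simp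
  with False show ?thesis by (simp add: field_simps)
qed

section \<open>C*-algebras and their states\<close>

locale cstar_algebra =
  fixes cmul :: "complex \<Rightarrow> 'a::{real_normed_algebra_1,banach} \<Rightarrow> 'a" and st :: "'a \<Rightarrow> 'a"
  assumes unital_cstar: "unital_cstar_algebra cmul st"
begin

lemma cmul_add_left: "cmul (a + b) x = cmul a x + cmul b x"
  and cmul_cmul: "cmul (a * b) x = cmul a (cmul b x)"
  and cmul_of_real: "cmul (complex_of_real r) x = r *\<^sub>R x"
  and cmul_mult_left: "cmul a (x * y) = cmul a x * y"
  and norm_cmul: "norm (cmul a x) = cmod a * norm x"
  and st_st [simp]: "st (st x) = x"
  and st_add: "st (x + y) = st x + st y"
  and st_mult: "st (x * y) = st y * st x"
  and st_cmul: "st (cmul a x) = cmul (cnj a) (st x)"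
  and norm_st_mult_self: "norm (st x * x) = (norm x)\<^sup>2"
  using unital_cstar unfolding unital_cstar_algebra_def by auto

lemma cmul_mult_right: "cmul a (x * y) = x * cmul a y"
  using unital_cstar unfolding unital_cstar_algebra_def by metis

lemma cmul_one_left: "cmul 1 x = x"
  using cmul_of_real[of 1 x] by simp

lemma cmul_zero_left: "cmul 0 x = 0"
  using cmul_of_real[of 0 x] by simp

lemma cmul_eq_cmul_one_mult: "cmul a x = cmul a 1 * x"
  using cmul_mult_left[of a 1 x] by simp

lemma cmul_eq_mult_cmul_one: "cmul a x = x * cmul a 1"
  using cmul_mult_right[of a x 1] by simp

lemma cmul_mult_cmul: "cmul a x * cmul b y = cmul (a * b) (x * y)"
  by (metis cmul_mult_left cmul_cmul cmul_mult_right)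

lemma st_zero [simp]: "st 0 = 0"
  using st_add[of 0 0] by simp

lemma st_minus: "st (- x) = - st x"
  using st_add[of x "- x"] by (simp add: eq_neg_iff_add_eq_0 add.commute)

lemma st_scaleR: "st (r *\<^sub>R x) = r *\<^sub>R st x"
  using st_cmul[of "complex_of_real r" x] by (simp add: cmul_of_real)

lemma st_one [simp]: "st 1 = 1"
  using st_mult[of 1 "st 1"] by simp

lemma st_sum: "st (sum f A) = (\<Sum>i\<in>A. st (f i))"
  by (induction A rule: infinite_finite_induct) (auto simp: st_add)

lemma st_power: "st (x ^ n) = st x ^ n"
  by (induction n) (auto simp: st_mult power_commutes)

lemma norm_st: "norm (st x) = norm x"
proof -
  have "norm z \<le> norm (st z)" for z
  proof (cases "z = 0")
    case False
    have "(norm z)\<^sup>2 \<le> norm (st z) * norm z"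
      using norm_st_mult_self[of z] norm_mult_ineq[of "st z" z] by simp
    then show ?thesis using False by (simp add: power2_eq_square)
  qed simp
  from this[of x] this[of "st x"] show ?thesis by simp
qed

lemma bounded_linear_st: "bounded_linear st"
  by (rule bounded_linear_intro[where K=1]) (auto simp: st_add st_scaleR norm_st)

lemma st_binomial_sqrt:
  assumes "st z = z" "norm z < 1"
  shows "st (binomial_sqrt z) = binomial_sqrt z"
proof -
  let ?a = "\<lambda>n. ((1/2::real) gchoose n) *\<^sub>R z ^ n"
  have "summable ?a"
    by (rule summable_norm_cancel[OF summable_norm_binomial_sqrt_series[OF assms(2)]])
  then show ?thesis
    unfolding binomial_sqrt_def bounded_linear.suminf[OF bounded_linear_st \<open>summable ?a\<close>]
    by (simp add: st_scaleR st_power assms(1))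
qed

lemma cmul_one_power: "cmul (c ^ n) 1 = cmul c 1 ^ n"
proof (induction n)
  case (Suc n)
  then show ?case using cmul_mult_cmul[of c 1 "c ^ n" 1] by simp
qed (simp add: cmul_one_left)

lemma bounded_linear_cmul_one: "bounded_linear (\<lambda>c. cmul c 1)"
  by (rule bounded_linear_intro[where K=1])
    (simp_all add: cmul_add_left scaleR_conv_of_real cmul_cmul cmul_of_real norm_cmul)

lemma exp_cmul_one: "exp (cmul c 1) = cmul (exp c) 1"
proof -
  have "cmul (exp c) 1 = (\<Sum>n. cmul (c ^ n /\<^sub>R fact n) 1)"
    unfolding exp_def by (rule bounded_linear.suminf[OF bounded_linear_cmul_one summable_exp_generic])
  also have "\<dots> = exp (cmul c 1)"
    unfolding exp_def by (simp only: scaleR_conv_of_real cmul_cmul cmul_of_real cmul_one_power)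
  finally show ?thesis by simp
qed

text \<open>\<open>a + i s\<close> is unitary, so \<open>a\<close>, its real part, is a contraction.\<close>

lemma norm_le_one_of_sum_of_squares:
  assumes "st a = a" "st s = s" "a * s = s * a" "a * a + s * s = 1"
  shows "norm a \<le> 1"
proof -
  define u where "u = a + cmul \<i> s"
  have cancel: "cmul \<i> v + cmul (- \<i>) v = 0" for v
    using cmul_add_left[of "\<i>" "- \<i>" v] by (simp add: cmul_zero_left)
  have st_u: "st u = a + cmul (- \<i>) s"
    unfolding u_def by (simp add: st_add st_cmul assms(1,2))
  have "st u * u = (a + cmul (- \<i>) s) * (a + cmul \<i> s)"
    unfolding st_u by (simp add: u_def)
  also have "\<dots> = a * a + a * cmul \<i> s + cmul (- \<i>) s * a + cmul (- \<i>) s * cmul \<i> s"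
    by (simp add: algebra_simps)
  also have "\<dots> = a * a + (cmul \<i> (a * s) + cmul (- \<i>) (a * s)) + cmul (- \<i> * \<i>) (s * s)"
    by (simp add: cmul_mult_cmul cmul_mult_right[symmetric] cmul_mult_left[symmetric] assms(3)
        cmul_cmul[symmetric])
  also have "\<dots> = 1"
    using cancel assms(4) by (simp add: cmul_one_left)
  finally have "(norm u)\<^sup>2 = 1"
    using norm_st_mult_self[of u] by simp
  then have "norm u = 1"
    using norm_ge_zero[of u] by (simp add: power2_eq_1_iff)
  have "2 *\<^sub>R a = u + st u"
    using cancel[of s] unfolding st_u by (simp add: u_def algebra_simps scaleR_2)
  then have "2 * norm a \<le> norm u + norm (st u)"
    by (metis norm_scaleR norm_triangle_ineq abs_numeral)
  then show ?thesis
    using \<open>norm u = 1\<close> by (simp add: norm_st)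
qed

lemma star_automorphism_norm_le:
  assumes aut: "star_automorphism cmul st g"
  shows "norm (g x) \<le> norm x"
proof -
  have g_add: "g (x + y) = g x + g y"
    and g_mult: "g (x * y) = g x * g y"
    and g_cmul: "g (cmul c x) = cmul c (g x)"
    and g_st: "g (st x) = st (g x)" for x y c
    using aut unfolding star_automorphism_def by blast+
  have g_scaleR: "g (r *\<^sub>R x) = r *\<^sub>R g x" for r x
    using g_cmul[of "complex_of_real r" x] by (simp add: cmul_of_real)
  have "g 1 = 1"
  proof -
    obtain p where "g p = 1"
      using aut unfolding star_automorphism_def by (metis bij_pointE)
    then show ?thesis using g_mult[of 1 p] by simp
  qed
  have self_adjoint: "norm (g h) \<le> norm h" if "st h = h" for h
  proof (rule norm_le_norm_of_unit_ball_bound[where P = "\<lambda>h. st h = h"])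
    fix h :: 'a
    assume "st h = h" "norm h < 1"
    define z where "z = - (h * h)"
    have "norm z < 1"
      unfolding z_def norm_minus_cancel
      using norm_mult_ineq[of h h] mult_strict_mono'[OF \<open>norm h < 1\<close> \<open>norm h < 1\<close>] by simp
    define k where "k = binomial_sqrt z"
    have "st z = z" unfolding z_def using \<open>st h = h\<close> by (simp add: st_minus st_mult)
    then have "st k = k" unfolding k_def using \<open>norm z < 1\<close> by (rule st_binomial_sqrt)
    have "h * k = k * h"
      unfolding k_def by (rule binomial_sqrt_commute[OF \<open>norm z < 1\<close>]) (simp add: z_def mult.assoc)
    have "h * h + k * k = 1"
      unfolding k_def binomial_sqrt_square[OF \<open>norm z < 1\<close>] by (simp add: z_def)
    show "norm (g h) \<le> 1"
    proof (rule norm_le_one_of_sum_of_squares[where s = "g k"])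
      show "st (g h) = g h" "st (g k) = g k"
        using g_st \<open>st h = h\<close> \<open>st k = k\<close> by metis+
      show "g h * g k = g k * g h"
        using \<open>h * k = k * h\<close> g_mult by metis
      show "g h * g h + g k * g k = 1"
        using \<open>h * h + k * k = 1\<close> \<open>g 1 = 1\<close> by (metis g_add g_mult)
    qed
  qed (use that in \<open>auto simp: st_scaleR g_scaleR\<close>)
  have "(norm (g x))\<^sup>2 = norm (g (st x * x))"
    by (simp add: g_mult g_st norm_st_mult_self)
  also have "\<dots> \<le> norm (st x * x)"
    by (rule self_adjoint) (simp add: st_mult)
  finally have "(norm (g x))\<^sup>2 \<le> (norm x)\<^sup>2"
    by (simp add: norm_st_mult_self)
  then show ?thesis
    by (simp add: power2_le_iff_abs_le)
qed

end

locale cstar_state = cstar_algebra +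
  fixes \<omega> :: "'a::{real_normed_algebra_1,banach} \<Rightarrow> complex"
  assumes state: "is_state cmul st \<omega>"
begin

lemma state_add: "\<omega> (x + y) = \<omega> x + \<omega> y"
  and state_cmul: "\<omega> (cmul c x) = c * \<omega> x"
  and Im_state_st_mult_self: "Im (\<omega> (st x * x)) = 0"
  and Re_state_st_mult_self_nonneg: "Re (\<omega> (st x * x)) \<ge> 0"
  and state_one [simp]: "\<omega> 1 = 1"
  using state unfolding is_state_def by blast+

lemma state_zero [simp]: "\<omega> 0 = 0"
  using state_add[of 0 0] by simp

lemma state_minus: "\<omega> (- x) = - \<omega> x"
  using state_add[of x "- x"] by (simp add: eq_neg_iff_add_eq_0 add.commute)

lemma state_diff: "\<omega> (x - y) = \<omega> x - \<omega> y"
  using state_add[of x "- y"] state_minus[of y] by simp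

lemma state_scaleR: "\<omega> (r *\<^sub>R x) = r *\<^sub>R \<omega> x"
  using state_cmul[of "complex_of_real r" x] by (simp add: cmul_of_real scaleR_conv_of_real)

lemma state_sum: "\<omega> (sum f A) = (\<Sum>i\<in>A. \<omega> (f i))"
  by (induction A rule: infinite_finite_induct) (auto simp: state_add)

text \<open>Positivity on \<open>(x + 1)\<^sup>*(x + 1)\<close> and \<open>(x + i)\<^sup>*(x + i)\<close> forces \<open>\<omega>\<close> to be hermitian.\<close>

lemma state_st: "\<omega> (st x) = cnj (\<omega> x)"
proof -
  have "st (x + 1) * (x + 1) = st x * x + st x + x + 1"
    by (simp add: st_add algebra_simps)
  then have "Im (\<omega> (st x * x) + \<omega> (st x) + \<omega> x + 1) = 0"
    using Im_state_st_mult_self[of "x + 1"] by (simp add: state_add)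
  then have Im_sum: "Im (\<omega> (st x)) + Im (\<omega> x) = 0"
    using Im_state_st_mult_self[of x] by simp
  have "st (x + cmul \<i> 1) * (x + cmul \<i> 1) = (st x + cmul (- \<i>) 1) * (x + cmul \<i> 1)"
    by (simp add: st_add st_cmul)
  also have "\<dots> = st x * x + st x * cmul \<i> 1 + cmul (- \<i>) 1 * x + cmul (- \<i>) 1 * cmul \<i> 1"
    by (simp only: distrib_left distrib_right add_ac)
  also have "\<dots> = st x * x + cmul \<i> (st x) + cmul (- \<i>) x + 1"
    by (simp add: cmul_mult_cmul cmul_eq_cmul_one_mult[symmetric] cmul_eq_mult_cmul_one[symmetric]
        cmul_one_left cmul_cmul[symmetric])
  finally have "Im (\<omega> (st x * x) + \<i> * \<omega> (st x) + (- \<i>) * \<omega> x + 1) = 0"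
    using Im_state_st_mult_self[of "x + cmul \<i> 1"] by (simp add: state_add state_cmul)
  then have Re_diff: "Re (\<omega> (st x)) - Re (\<omega> x) = 0"
    using Im_state_st_mult_self[of x] by simp
  show ?thesis
    using Im_sum Re_diff by (simp add: complex_eq_iff)
qed

lemma state_Cauchy_Schwarz:
  "(cmod (\<omega> (st a * b)))\<^sup>2 \<le> Re (\<omega> (st a * a)) * Re (\<omega> (st b * b))"
proof (cases "\<omega> (st a * b) = 0")
  case True
  then show ?thesis
    using Re_state_st_mult_self_nonneg[of a] Re_state_st_mult_self_nonneg[of b] by simp
next
  case False
  define u where "u = \<omega> (st a * b)"
  define l where "l = cnj u / of_real (cmod u)"
  have "cnj l * l = 1" and "l * u = of_real (cmod u)"
    using False unfolding l_def u_def
    by (simp_all add: complex_norm_square[symmetric] power2_eq_square field_simps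
        complex_mult_cnj[symmetric] mult.commute)
  define b' where "b' = cmul l b"
  have phase: "\<omega> (st a * b') = of_real (cmod u)"
    unfolding b'_def by (simp add: cmul_mult_right[symmetric] state_cmul u_def[symmetric] \<open>l * u = _\<close>)
  then have phase': "\<omega> (st b' * a) = of_real (cmod u)"
    using state_st[of "st a * b'"] by (simp add: st_mult)
  have "st b' * b' = st b * b"
    unfolding b'_def by (simp add: st_cmul cmul_mult_cmul \<open>cnj l * l = 1\<close> cmul_one_left)
  have "0 \<le> Re (\<omega> (st a * a)) + 2 * s * cmod u + s\<^sup>2 * Re (\<omega> (st b * b))" for s
  proof -
    have "st (a + s *\<^sub>R b') * (a + s *\<^sub>R b') =
        st a * a + s *\<^sub>R (st a * b') + s *\<^sub>R (st b' * a) + s\<^sup>2 *\<^sub>R (st b' * b')"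
      by (simp add: st_add st_scaleR algebra_simps power2_eq_square)
    then have "Re (\<omega> (st (a + s *\<^sub>R b') * (a + s *\<^sub>R b'))) =
        Re (\<omega> (st a * a)) + 2 * s * cmod u + s\<^sup>2 * Re (\<omega> (st b * b))"
      by (simp add: state_add state_scaleR phase phase' \<open>st b' * b' = st b * b\<close>)
    then show ?thesis
      using Re_state_st_mult_self_nonneg[of "a + s *\<^sub>R b'"] by simp
  qed
  then show ?thesis
    unfolding u_def by (rule square_le_of_quadratic_nonneg[OF Re_state_st_mult_self_nonneg])
qed

lemma norm_state_le: "cmod (\<omega> x) \<le> norm x"
proof (rule norm_le_norm_of_unit_ball_bound[where P = "\<lambda>_. True"])
  fix x :: 'a
  assume "norm x < 1"
  define z where "z = - (st x * x)"
  have "norm z < 1"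
    unfolding z_def norm_minus_cancel norm_st_mult_self
    using \<open>norm x < 1\<close> by (simp add: power_less_one_iff abs_less_iff)
  define k where "k = binomial_sqrt z"
  have "st z = z" by (simp add: z_def st_minus st_mult)
  then have "st k * k = 1 - st x * x"
    unfolding k_def st_binomial_sqrt[OF \<open>st z = z\<close> \<open>norm z < 1\<close>]
      binomial_sqrt_square[OF \<open>norm z < 1\<close>] by (simp add: z_def)
  then have "Re (\<omega> (st x * x)) \<le> 1"
    using Re_state_st_mult_self_nonneg[of k] by (simp add: state_diff)
  moreover have "(cmod (\<omega> (st 1 * x)))\<^sup>2 \<le> Re (\<omega> (st 1 * 1)) * Re (\<omega> (st x * x))"
    by (rule state_Cauchy_Schwarz)
  ultimately have "(cmod (\<omega> x))\<^sup>2 \<le> 1"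
    by simp
  then show "norm (\<omega> x) \<le> 1"
    by (simp add: power_le_one_iff abs_le_square_iff power2_le_iff_abs_le)
qed (simp_all add: state_scaleR)

lemma state_mult_Cauchy_Schwarz: "(cmod (\<omega> (x * d)))\<^sup>2 \<le> (norm x)\<^sup>2 * Re (\<omega> (st d * d))"
proof -
  have "(cmod (\<omega> (st (st x) * d)))\<^sup>2 \<le> Re (\<omega> (st (st x) * st x)) * Re (\<omega> (st d * d))"
    by (rule state_Cauchy_Schwarz)
  moreover have "Re (\<omega> (x * st x)) \<le> (norm x)\<^sup>2"
    using complex_Re_le_cmod norm_state_le[of "x * st x"] norm_mult_ineq[of x "st x"]
    by (simp add: norm_st power2_eq_square) (meson order_trans)
  ultimately show ?thesis
    using Re_state_st_mult_self_nonneg[of d] by simp (meson mult_right_mono order_trans)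
qed

lemma Re_state_variance_of_average_le:
  fixes u :: "int \<Rightarrow> 'a" and I :: "int set" and w :: int and E :: real
  assumes "finite I" "I \<noteq> {}" "w \<ge> 0"
    and bound: "\<And>k l. cmod (\<omega> (st (u k) * u l)) \<le> E"
    and decorrelated: "\<And>k l. w < \<bar>k - l\<bar> \<Longrightarrow> \<omega> (st (u k) * u l) = 0"
    and d_def: "d = (1 / real (card I)) *\<^sub>R (\<Sum>k\<in>I. u k)"
  shows "Re (\<omega> (st d * d)) \<le> (2 * w + 1) * E / real (card I)"
proof -
  let ?N = "real (card I)"
  have "?N > 0" using assms(1,2) by (simp add: card_gt_0_iff)
  have "\<omega> (st d * d) = (1 / ?N)\<^sup>2 *\<^sub>R (\<Sum>k\<in>I. \<Sum>l\<in>I. \<omega> (st (u k) * u l))"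
    by (simp add: d_def st_scaleR st_sum sum_product power2_eq_square state_scaleR state_sum)
  then have "Re (\<omega> (st d * d)) \<le> (1 / ?N)\<^sup>2 * cmod (\<Sum>k\<in>I. \<Sum>l\<in>I. \<omega> (st (u k) * u l))"
    using complex_Re_le_cmod[of "(1 / ?N)\<^sup>2 *\<^sub>R (\<Sum>k\<in>I. \<Sum>l\<in>I. \<omega> (st (u k) * u l))"]
    by (simp only: norm_scaleR abs_power2)
  also have "\<dots> \<le> (1 / ?N)\<^sup>2 * (\<Sum>k\<in>I. \<Sum>l\<in>I. cmod (\<omega> (st (u k) * u l)))"
    by (intro mult_left_mono order_trans[OF norm_sum sum_mono[OF norm_sum]]) simp_all
  also have "\<dots> \<le> (1 / ?N)\<^sup>2 * (\<Sum>k\<in>I. (2 * w + 1) * E)"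
  proof (intro mult_left_mono sum_mono)
    fix k
    show "(\<Sum>l\<in>I. cmod (\<omega> (st (u k) * u l))) \<le> (2 * w + 1) * E"
      using sum_banded_le[OF \<open>finite I\<close> \<open>w \<ge> 0\<close>, where f = "\<lambda>l. cmod (\<omega> (st (u k) * u l))" and k = k]
        bound decorrelated by simp
  qed simp
  also have "\<dots> = (2 * w + 1) * E / ?N"
    using \<open>?N > 0\<close> by (simp add: power2_eq_square)
  finally show ?thesis .
qed

lemma state_mult_exp_tendsto:
  assumes x_bound: "\<And>n. norm (x n) \<le> B" and d_bound: "\<And>n. norm (d n) \<le> R"
    and x_lim: "(\<lambda>n. \<omega> (x n)) \<longlonglongrightarrow> L"
    and variance_lim: "(\<lambda>n. Re (\<omega> (st (d n) * d n))) \<longlonglongrightarrow> 0"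
  shows "(\<lambda>n. \<omega> (x n * exp (cmul c 1 + d n))) \<longlonglongrightarrow> L * exp c"
proof -
  have "\<forall>n. \<exists>F. exp (d n) = 1 + F * d n \<and> norm F \<le> exp (norm (d n))"
    using exp_eq_one_plus_mult by blast
  then obtain F where F: "\<And>n. exp (d n) = 1 + F n * d n" and F_bound: "\<And>n. norm (F n) \<le> exp (norm (d n))"
    by metis
  define r where "r n = \<omega> (x n * F n * d n)" for n
  have split: "\<omega> (x n * exp (cmul c 1 + d n)) = exp c * (\<omega> (x n) + r n)" for n
  proof -
    have "cmul c 1 * d n = d n * cmul c 1"
      using cmul_eq_cmul_one_mult cmul_eq_mult_cmul_one by metis
    then have "exp (cmul c 1 + d n) = cmul (exp c) (1 + F n * d n)"
      by (simp add: exp_add_commuting exp_cmul_one F cmul_eq_cmul_one_mult[symmetric])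
    then have "x n * exp (cmul c 1 + d n) = cmul (exp c) (x n + x n * F n * d n)"
      by (simp add: cmul_mult_right[symmetric] distrib_left mult.assoc)
    then show ?thesis
      by (simp add: state_cmul state_add r_def)
  qed
  define K where "K = (B * exp R)\<^sup>2"
  have r_bound: "norm (r n) \<le> sqrt (K * Re (\<omega> (st (d n) * d n)))" for n
  proof -
    have "norm (x n * F n) \<le> B * exp R"
      using norm_mult_ineq[of "x n" "F n"] x_bound[of n] F_bound[of n] d_bound[of n]
      by (smt (verit, best) exp_le_cancel_iff mult_mono norm_ge_zero)
    then have "(cmod (r n))\<^sup>2 \<le> K * Re (\<omega> (st (d n) * d n))"
      unfolding r_def K_def
      using state_mult_Cauchy_Schwarz[of "x n * F n" "d n"] Re_state_st_mult_self_nonneg[of "d n"]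
      by (smt (verit) mult_right_mono norm_ge_zero power_mono)
    then show ?thesis
      by (simp add: real_le_rsqrt)
  qed
  have "(\<lambda>n. sqrt (K * Re (\<omega> (st (d n) * d n)))) \<longlonglongrightarrow> 0"
    using tendsto_real_sqrt[OF tendsto_mult_right_zero[OF variance_lim]] by simp
  then have "r \<longlonglongrightarrow> 0"
    by (rule Lim_null_comparison[OF always_eventually[OF allI[OF r_bound]]])
  then have "(\<lambda>n. exp c * (\<omega> (x n) + r n)) \<longlonglongrightarrow> exp c * (L + 0)"
    by (intro tendsto_intros x_lim)
  then show ?thesis
    by (simp add: split mult.commute)
qed

end

section \<open>Quasi-local dynamics\<close>

locale quasi_local_dynamics =
  fixes cmul :: "complex \<Rightarrow> 'a::{real_normed_algebra_1,banach} \<Rightarrow> 'a" and st :: "'a \<Rightarrow> 'a"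
    and M :: "int set \<Rightarrow> 'a set" and \<gamma> :: "int \<Rightarrow> 'a \<Rightarrow> 'a" and \<omega> :: "'a \<Rightarrow> complex"
  assumes quasi_local: "quasi_local cmul st M"
    and action: "translation_action cmul st M \<gamma>"
    and invariant_state: "invariant_multiplicative_state cmul st M \<gamma> \<omega>"

sublocale quasi_local_dynamics \<subseteq> cstar_state
proof
  show "unital_cstar_algebra cmul st"
    using quasi_local unfolding quasi_local_def by simp
  show "is_state cmul st \<omega>"
    using invariant_state unfolding invariant_multiplicative_state_def by simp
qed

context quasi_local_dynamics
begin

lemma state_translate: "\<omega> (\<gamma> j x) = \<omega> x"
  using invariant_state unfolding invariant_multiplicative_state_def by simp

lemma state_mult_disjoint:
  assumes "fin_interval I" "fin_interval J" "I \<inter> J = {}" "x \<in> M I" "y \<in> M J"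
  shows "\<omega> (x * y) = \<omega> x * \<omega> y"
  using invariant_state assms unfolding invariant_multiplicative_state_def by blast

lemma local_diff_cmul_one_mem:
  assumes "fin_interval I" "x \<in> M I"
  shows "x - cmul c 1 \<in> M I"
proof -
  have "wstar_subalgebra cmul st (M I)"
    using quasi_local assms(1) unfolding quasi_local_def by simp
  then have "1 \<in> M I" "\<And>x y. x \<in> M I \<Longrightarrow> y \<in> M I \<Longrightarrow> x + y \<in> M I"
    "\<And>c x. x \<in> M I \<Longrightarrow> cmul c x \<in> M I"
    unfolding wstar_subalgebra_def by simp_all
  then have "x + cmul (-1) (cmul c 1) \<in> M I"
    using assms(2) by simp
  then show ?thesis
    using cmul_of_real[of "-1" "cmul c 1"] by simp
qed

lemma local_st_mem:
  assumes "fin_interval I" "x \<in> M I"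
  shows "st x \<in> M I"
proof -
  have "wstar_subalgebra cmul st (M I)"
    using quasi_local assms(1) unfolding quasi_local_def by simp
  then show ?thesis
    using assms(2) unfolding wstar_subalgebra_def by simp
qed

lemma translate_mem_local:
  assumes "a \<le> b" "y \<in> M {a..b}"
  shows "\<gamma> k y \<in> M {a + k..b + k}"
proof -
  have "fin_interval {a..b}"
    using assms(1) unfolding fin_interval_def by auto
  then have "\<gamma> k ` M {a..b} = M {a + k..b + k}"
    using action unfolding translation_action_def by simp
  then show ?thesis
    using imageI[OF assms(2), of "\<gamma> k"] by simp
qed

lemma norm_translate_le: "norm (\<gamma> k y) \<le> norm y"
proof (rule star_automorphism_norm_le)
  show "star_automorphism cmul st (\<gamma> k)"
    using action unfolding translation_action_def by simp
qed

lemma centered_translates_uncorrelated: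
  assumes "a \<le> b" "y \<in> M {a..b}" "b - a < \<bar>k - l\<bar>"
  shows "\<omega> (st (\<gamma> k y - cmul (\<omega> y) 1) * (\<gamma> l y - cmul (\<omega> y) 1)) = 0"
proof -
  define u where "u j = \<gamma> j y - cmul (\<omega> y) 1" for j
  have interval: "fin_interval {a + j..b + j}" for j
    using \<open>a \<le> b\<close> unfolding fin_interval_def by auto
  have u_mem: "u j \<in> M {a + j..b + j}" for j
    unfolding u_def by (rule local_diff_cmul_one_mem[OF interval translate_mem_local[OF assms(1,2)]])
  have centered: "\<omega> (u j) = 0" for j
    unfolding u_def by (simp add: state_diff state_cmul state_translate)
  have "{a + k..b + k} \<inter> {a + l..b + l} = {}"
    using assms(3) by auto
  then have "\<omega> (st (u k) * u l) = \<omega> (st (u k)) * \<omega> (u l)"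
    by (rule state_mult_disjoint[OF interval interval _ local_st_mem[OF interval u_mem] u_mem])
  then show ?thesis
    using centered unfolding u_def by simp
qed

definition centered_average :: "int set \<Rightarrow> 'a \<Rightarrow> 'a" where
  "centered_average I y = (1 / real (card I)) *\<^sub>R (\<Sum>k\<in>I. \<gamma> k y - cmul (\<omega> y) 1)"

lemma average_translates_eq:
  assumes "finite I" "I \<noteq> {}"
  shows "(1 / real (card I)) *\<^sub>R (\<Sum>k\<in>I. \<gamma> k y) = cmul (\<omega> y) 1 + centered_average I y"
  unfolding centered_average_def using assms by (intro average_eq_add_average_diff) (simp add: card_gt_0_iff)

lemma norm_centered_translate_le: "norm (\<gamma> k y - cmul (\<omega> y) 1) \<le> norm y + cmod (\<omega> y)"
  using norm_triangle_ineq4[of "\<gamma> k y" "cmul (\<omega> y) 1"] norm_translate_le[of k y] norm_cmul[of "\<omega> y" 1]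
  by simp

lemma norm_centered_average_le: "norm (centered_average I y) \<le> norm y + cmod (\<omega> y)"
  unfolding centered_average_def by (rule norm_average_le[OF norm_centered_translate_le])

lemma Re_state_variance_centered_average_le:
  assumes "a \<le> b" "y \<in> M {a..b}" "finite I" "I \<noteq> {}"
  defines "d \<equiv> centered_average I y"
  shows "Re (\<omega> (st d * d)) \<le> of_int (2 * (b - a) + 1) * (norm y + cmod (\<omega> y))\<^sup>2 / real (card I)"
proof (rule Re_state_variance_of_average_le[OF assms(3,4)])
  let ?u = "\<lambda>k. \<gamma> k y - cmul (\<omega> y) 1"
  show "cmod (\<omega> (st (?u k) * ?u l)) \<le> (norm y + cmod (\<omega> y))\<^sup>2" for k l
  proof -
    have "cmod (\<omega> (st (?u k) * ?u l)) \<le> norm (?u k) * norm (?u l)"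
      using norm_state_le[of "st (?u k) * ?u l"] norm_mult_ineq[of "st (?u k)" "?u l"]
      by (simp add: norm_st)
    also have "\<dots> \<le> (norm y + cmod (\<omega> y))\<^sup>2"
      using mult_mono[OF norm_centered_translate_le norm_centered_translate_le]
      by (simp add: power2_eq_square)
    finally show ?thesis .
  qed
  show "\<omega> (st (?u k) * ?u l) = 0" if "b - a < \<bar>k - l\<bar>" for k l
    by (rule centered_translates_uncorrelated[OF assms(1,2) that])
  show "d = (1 / real (card I)) *\<^sub>R (\<Sum>k\<in>I. ?u k)"
    unfolding d_def centered_average_def ..
qed (use \<open>a \<le> b\<close> in simp)

end

theorem lemmaA4:
  fixes cmul :: "complex \<Rightarrow> 'a::{real_normed_algebra_1,banach} \<Rightarrow> 'a"
    and st :: "'a \<Rightarrow> 'a"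
    and M :: "int set \<Rightarrow> 'a set"
    and \<gamma> :: "int \<Rightarrow> 'a \<Rightarrow> 'a"
    and \<omega> :: "'a \<Rightarrow> complex"
    and In :: "nat \<Rightarrow> int set"
    and x :: "nat \<Rightarrow> 'a"
    and y :: 'a
  assumes ql: "quasi_local cmul st M"
    and act: "translation_action cmul st M \<gamma>"
    and hchi: "invariant_multiplicative_state cmul st M \<gamma> \<omega>"
    and In_int: "\<And>n. fin_interval (In n)"
    and In_mono: "\<And>n. In n \<subseteq> In (Suc n)"
    and In_union: "(\<Union>n. In n) = UNIV"
    and y_loc: "y \<in> local_part M"
    and x_bdd: "\<exists>B. \<forall>n. norm (x n) \<le> B"
    and x_conv: "convergent (\<lambda>n. \<omega> (x n))"
  shows "(\<lambda>n. \<omega> (x n * exp ((1 / real (card (In n))) *\<^sub>R (\<Sum>k\<in>In n. \<gamma> k y))))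
           \<longlonglongrightarrow> lim (\<lambda>n. \<omega> (x n)) * exp (\<omega> y)"
proof -
  interpret quasi_local_dynamics cmul st M \<gamma> \<omega>
    using ql act hchi by unfold_locales
  obtain a b where "a \<le> b" "y \<in> M {a..b}"
    using y_loc unfolding local_part_def fin_interval_def by blast
  obtain B where x_bound: "\<And>n. norm (x n) \<le> B"
    using x_bdd by blast
  have fin: "finite (In n)" "In n \<noteq> {}" for n
    using In_int[of n] unfolding fin_interval_def by auto
  define C where "C = of_int (2 * (b - a) + 1) * (norm y + cmod (\<omega> y))\<^sup>2"
  have bound_lim: "(\<lambda>n. C / real (card (In n))) \<longlonglongrightarrow> 0"
    using card_tendsto_at_top_of_exhausting[OF fin(1) In_mono In_union]
    by (intro tendsto_divide_0[OF tendsto_const] filterlim_at_top_imp_at_infinity)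
  have variance_lim:
    "(\<lambda>n. Re (\<omega> (st (centered_average (In n) y) * centered_average (In n) y))) \<longlonglongrightarrow> 0"
    by (rule tendsto_sandwich[OF always_eventually always_eventually tendsto_const bound_lim])
      (intro allI Re_state_st_mult_self_nonneg,
       unfold C_def, intro allI Re_state_variance_centered_average_le[OF \<open>a \<le> b\<close> \<open>y \<in> M {a..b}\<close> fin])
  have x_lim: "(\<lambda>n. \<omega> (x n)) \<longlonglongrightarrow> lim (\<lambda>n. \<omega> (x n))"
    using x_conv by (simp add: convergent_LIMSEQ_iff)
  show ?thesis
    unfolding average_translates_eq[OF fin]
    by (rule state_mult_exp_tendsto[OF x_bound norm_centered_average_le x_lim variance_lim])
qed

end
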